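(* Let $X$ be a shift space over $\mathcal{A}_3=\{1,2,3\}$, let $\sigma\in\mathcal{S}_3$ be a morphism that is not left-invariant (resp. not right-invariant), and let $Y$ be the image of $X$ under $\sigma$. If $v\in\mathcal{L}(X)$ is a dendric bispecial factor, then every dendric extended image $u$ of $v$ satisfies $\mathcal{C}^-_Y(u)=\emptyset$ (resp. $\mathcal{C}^+_Y(u)=\emptyset$). In particular, if $X$ is dendric and $\sigma\in\mathrm{DP}(X)$, then $\mathcal{C}^-(Y)=\mathcal{C}^-_Y(\varepsilon)\ne\emptyset$ (resp. $\mathcal{C}^+(Y)=\mathcal{C}^+_Y(\varepsilon)\ne\emptyset$).
   Context: A shift space over $\mathcal{A}$ is a closed shift-invariant $X\subseteq\mathcal{A}^{\mathbb{Z}}$ in which all letters occur, with factor set $\mathcal{L}(X)$ ($\varepsilon$ the empty word). For $w\in\mathcal{L}(X)$, $\mathcal{E}_X(w)$ is the bipartite graph with left vertices $a^-$ ($aw\in\mathcal{L}(X)$), right vertices $b^+$ ($wb\in\mathcal{L}(X)$), edges $\{a^-,b^+\}$ ($awb\in\mathcal{L}(X)$); $w$ is bispecial if it has at least two left and two right vertices, dendric if $\mathcal{E}_X(w)$ is a tree; $X$ is dendric if all factors are. $\mathcal{C}^-_X(w)$ (resp. $\mathcal{C}^+_X(w)$): letters $a$ such that removing $a^-$ (resp. $a^+$) and resulting isolated vertices from $\mathcal{E}_X(w)$ leaves a disconnected graph; $\mathcal{C}^\pm(X)=\bigcup_{w\in\mathcal{L}(X)}\mathcal{C}^\pm_X(w)$.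 $\mathcal{S}_3=\{\alpha,\beta,\gamma,\eta\}\cup\{\delta^{(k)},\zeta^{(k)}:k\ge1\}$ with $\alpha:1\mapsto1,2\mapsto12,3\mapsto13$; $\beta:1\mapsto1,2\mapsto12,3\mapsto132$; $\gamma:1\mapsto1,2\mapsto12,3\mapsto123$; $\delta^{(k)}:1\mapsto1,2\mapsto123^k,3\mapsto123^{k+1}$; $\zeta^{(k)}:1\mapsto13^k,2\mapsto12,3\mapsto13^{k+1}$; $\eta:1\mapsto13,2\mapsto12,3\mapsto123$. For $\sigma\in\mathcal{S}_3$, $\mathcal{T}^-(\sigma)$ is the set of longest common suffixes of $\sigma(a_1),\sigma(a_2)$ and $\mathcal{T}^+(\sigma)$ the set of longest common prefixes of $\sigma(b_1),\sigma(b_2)$, over distinct letters; $\sigma$ is left-invariant (right-invariant) if $\mathcal{T}^-(\sigma)$ ($\mathcal{T}^+(\sigma)$) is a singleton. Image of $X$: $Y=\{S^k\sigma(x):x\in X,0\le k<|\sigma(x_0)|\}$. For non-empty $u\in\mathcal{L}(Y)$ containing $1$ there is a unique triple $(s,v,p)$, $v\in\mathcal{L}(X)$, $u=s\sigma(v)p$, with $s$ a proper suffix of $\sigma(a)$ and $p$ a non-empty prefix of $\sigma(b)$ for some $a,b$ with $avb\in\mathcal{L}(X)$; $u$ is an extended image of $v$. $\mathrm{DP}(X)$ is the set of $\sigma\in\mathcal{S}_3$ such that every bispecial extended image (in $Y$) of every $v\in\mathcal{L}(X)$ is dendric. *)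

theory Defs
  imports "HOL-Analysis.Analysis"
begin

text \<open>Points are bi-infinite sequences int => nat; the topology on int => nat is the
 product topology (Function_Topology) of the discrete topology on nat.\<close>

definition A3 :: "nat set" where "A3 = {1,2,3}"

definition shiftS :: "(int \<Rightarrow> nat) \<Rightarrow> (int \<Rightarrow> nat)" where
  "shiftS x = (\<lambda>i. x (i + 1))"

definition shift_space :: "(int \<Rightarrow> nat) set \<Rightarrow> bool" where
  "shift_space X \<longleftrightarrow>
     (\<forall>x\<in>X. \<forall>i. x i \<in> A3) \<and> closed X \<and> shiftS ` X = X \<and>
     (\<forall>a\<in>A3. \<exists>x\<in>X. \<exists>i. x i = a)"

text \<open>Factor set (language); contains the empty word.\<close>
definition lang :: "(int \<Rightarrow> nat) set \<Rightarrow> nat list set" where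
  "lang X = {w. \<exists>x\<in>X. \<exists>i::int. w = map (\<lambda>j. x (i + int j)) [0..<length w]}"

definition adj :: "'v set \<Rightarrow> ('v \<times> 'v) set \<Rightarrow> ('v \<times> 'v) set" where
  "adj V E = {(x,y). x \<in> V \<and> y \<in> V \<and> ((x,y) \<in> E \<or> (y,x) \<in> E)}"

definition connected_graph :: "'v set \<Rightarrow> ('v \<times> 'v) set \<Rightarrow> bool" where
  "connected_graph V E \<longleftrightarrow> (\<forall>u\<in>V. \<forall>v\<in>V. (u,v) \<in> (adj V E)\<^sup>*)"

text \<open>A graph is acyclic iff every edge is a bridge (its endpoints are not
 joined by a path avoiding it).  A tree is a connected acyclic graph.\<close>
definition acyclic_graph :: "'v set \<Rightarrow> ('v \<times> 'v) set \<Rightarrow> bool" where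
  "acyclic_graph V E \<longleftrightarrow>
     (\<forall>(x,y)\<in>E. x \<noteq> y \<and> (x,y) \<notin> (adj V (E - {(x,y),(y,x)}))\<^sup>*)"

definition is_tree :: "'v set \<Rightarrow> ('v \<times> 'v) set \<Rightarrow> bool" where
  "is_tree V E \<longleftrightarrow> connected_graph V E \<and> acyclic_graph V E"

definition left_ext :: "(int \<Rightarrow> nat) set \<Rightarrow> nat list \<Rightarrow> nat set" where
  "left_ext X w = {a. a # w \<in> lang X}"

definition right_ext :: "(int \<Rightarrow> nat) set \<Rightarrow> nat list \<Rightarrow> nat set" where
  "right_ext X w = {b. w @ [b] \<in> lang X}"

text \<open>Left vertices a^- are Inl a, right vertices b^+ are Inr b.\<close>
definition ext_vertices :: "(int \<Rightarrow> nat) set \<Rightarrow> nat list \<Rightarrow> (nat + nat) set" where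
  "ext_vertices X w = Inl ` left_ext X w \<union> Inr ` right_ext X w"

definition ext_edges :: "(int \<Rightarrow> nat) set \<Rightarrow> nat list \<Rightarrow> ((nat + nat) \<times> (nat + nat)) set" where
  "ext_edges X w = {(Inl a, Inr b) | a b. a # w @ [b] \<in> lang X}"

definition bispecial :: "(int \<Rightarrow> nat) set \<Rightarrow> nat list \<Rightarrow> bool" where
  "bispecial X w \<longleftrightarrow> w \<in> lang X \<and> card (left_ext X w) \<ge> 2 \<and> card (right_ext X w) \<ge> 2"

definition dendric :: "(int \<Rightarrow> nat) set \<Rightarrow> nat list \<Rightarrow> bool" where
  "dendric X w \<longleftrightarrow> is_tree (ext_vertices X w) (ext_edges X w)"

definition dendric_shift :: "(int \<Rightarrow> nat) set \<Rightarrow> bool" where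
  "dendric_shift X \<longleftrightarrow> (\<forall>w\<in>lang X. dendric X w)"

definition removed_edges :: "('v \<times> 'v) set \<Rightarrow> 'v \<Rightarrow> ('v \<times> 'v) set" where
  "removed_edges E z = {e \<in> E. fst e \<noteq> z \<and> snd e \<noteq> z}"

definition removed_vertices :: "'v set \<Rightarrow> ('v \<times> 'v) set \<Rightarrow> 'v \<Rightarrow> 'v set" where
  "removed_vertices V E z =
     {v \<in> V - {z}. \<exists>e\<in>removed_edges E z. fst e = v \<or> snd e = v}"

definition C_minus :: "(int \<Rightarrow> nat) set \<Rightarrow> nat list \<Rightarrow> nat set" where
  "C_minus X w = {a \<in> left_ext X w.
     \<not> connected_graph (removed_vertices (ext_vertices X w) (ext_edges X w) (Inl a))
                       (removed_edges (ext_edges X w) (Inl a))}"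

definition C_plus :: "(int \<Rightarrow> nat) set \<Rightarrow> nat list \<Rightarrow> nat set" where
  "C_plus X w = {b \<in> right_ext X w.
     \<not> connected_graph (removed_vertices (ext_vertices X w) (ext_edges X w) (Inr b))
                       (removed_edges (ext_edges X w) (Inr b))}"

definition C_minus_all :: "(int \<Rightarrow> nat) set \<Rightarrow> nat set" where
  "C_minus_all X = (\<Union>w\<in>lang X. C_minus X w)"

definition C_plus_all :: "(int \<Rightarrow> nat) set \<Rightarrow> nat set" where
  "C_plus_all X = (\<Union>w\<in>lang X. C_plus X w)"

type_synonym morph = "nat \<Rightarrow> nat list"

definition alpha :: morph where
  "alpha a = (if a = 1 then [1] else if a = 2 then [1,2] else if a = 3 then [1,3] else [])"
definition beta :: morph where
  "beta a = (if a = 1 then [1] else if a = 2 then [1,2] else if a = 3 then [1,3,2] else [])"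
definition gamma :: morph where
  "gamma a = (if a = 1 then [1] else if a = 2 then [1,2] else if a = 3 then [1,2,3] else [])"
definition delta :: "nat \<Rightarrow> morph" where
  "delta k a = (if a = 1 then [1] else if a = 2 then [1,2] @ replicate k 3
               else if a = 3 then [1,2] @ replicate (k+1) 3 else [])"
definition zeta :: "nat \<Rightarrow> morph" where
  "zeta k a = (if a = 1 then 1 # replicate k 3 else if a = 2 then [1,2]
              else if a = 3 then 1 # replicate (k+1) 3 else [])"
definition eta :: morph where
  "eta a = (if a = 1 then [1,3] else if a = 2 then [1,2] else if a = 3 then [1,2,3] else [])"

definition S3 :: "morph set" where
  "S3 = {alpha, beta, gamma, eta} \<union> {delta k | k. k \<ge> 1} \<union> {zeta k | k. k \<ge> 1}"

definition morph_word :: "morph \<Rightarrow> nat list \<Rightarrow> nat list" where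
  "morph_word \<sigma> w = concat (map \<sigma> w)"

fun lcp :: "nat list \<Rightarrow> nat list \<Rightarrow> nat list" where
  "lcp (x # xs) (y # ys) = (if x = y then x # lcp xs ys else [])"
| "lcp _ _ = []"

definition lcs :: "nat list \<Rightarrow> nat list \<Rightarrow> nat list" where
  "lcs u v = rev (lcp (rev u) (rev v))"

definition T_minus :: "morph \<Rightarrow> nat list set" where
  "T_minus \<sigma> = {lcs (\<sigma> a1) (\<sigma> a2) | a1 a2. a1 \<in> A3 \<and> a2 \<in> A3 \<and> a1 \<noteq> a2}"
definition T_plus :: "morph \<Rightarrow> nat list set" where
  "T_plus \<sigma> = {lcp (\<sigma> b1) (\<sigma> b2) | b1 b2. b1 \<in> A3 \<and> b2 \<in> A3 \<and> b1 \<noteq> b2}"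

definition left_invariant :: "morph \<Rightarrow> bool" where
  "left_invariant \<sigma> \<longleftrightarrow> (\<exists>t. T_minus \<sigma> = {t})"
definition right_invariant :: "morph \<Rightarrow> bool" where
  "right_invariant \<sigma> \<longleftrightarrow> (\<exists>t. T_plus \<sigma> = {t})"

text \<open>sigma(x): the sequence obtained by concatenating the sigma(x_n), with
 sigma(x_0) starting at position 0 (c n is the starting position of sigma(x_n)).\<close>
definition morph_seq :: "morph \<Rightarrow> (int \<Rightarrow> nat) \<Rightarrow> (int \<Rightarrow> nat)" where
  "morph_seq \<sigma> x = (THE y. \<exists>c :: int \<Rightarrow> int. c 0 = 0 \<and>
      (\<forall>n. c (n + 1) = c n + int (length (\<sigma> (x n)))) \<and>
      (\<forall>n j. j < length (\<sigma> (x n)) \<longrightarrow> y (c n + int j) = \<sigma> (x n) ! j))"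

definition image_shift :: "morph \<Rightarrow> (int \<Rightarrow> nat) set \<Rightarrow> (int \<Rightarrow> nat) set" where
  "image_shift \<sigma> X = {(shiftS ^^ k) (morph_seq \<sigma> x) | x k. x \<in> X \<and> k < length (\<sigma> (x 0))}"

text \<open>u is an extended image of v: u = s sigma(v) p with s a proper suffix of
 sigma(a), p a non-empty prefix of sigma(b), avb in L(X).\<close>
definition ext_image :: "morph \<Rightarrow> (int \<Rightarrow> nat) set \<Rightarrow> nat list \<Rightarrow> nat list \<Rightarrow> bool" where
  "ext_image \<sigma> X v u \<longleftrightarrow>
     v \<in> lang X \<and> u \<in> lang (image_shift \<sigma> X) \<and> u \<noteq> [] \<and> 1 \<in> set u \<and>
     (\<exists>s p a b. a # v @ [b] \<in> lang X \<and>
        (\<exists>t. t \<noteq> [] \<and> \<sigma> a = t @ s) \<and>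
        p \<noteq> [] \<and> (\<exists>t. \<sigma> b = p @ t) \<and>
        u = s @ morph_word \<sigma> v @ p)"

definition DP :: "(int \<Rightarrow> nat) set \<Rightarrow> morph set" where
  "DP X = {\<sigma> \<in> S3. \<forall>v\<in>lang X. \<forall>u. ext_image \<sigma> X v u \<and> bispecial (image_shift \<sigma> X) u
              \<longrightarrow> dendric (image_shift \<sigma> X) u}"

end

theory Submission
  imports Defs
begin

text \<open>Every image of a letter under a morphism of \<open>S_3\<close> starts with 1, so the two-letter factors
  of \<open>Y\<close> are the two-letter factors of the words \<open>\<sigma>(a)\<close> together with the pairs
  \<open>(last \<sigma>(a), 1)\<close>; for each morphism this set is computed explicitly.
  If \<open>\<sigma>\<close> is not left-invariant, every letter is preceded by at most two letters in these
  pairs, so every non-empty factor \<open>u\<close> has at most two left extensions. Deleting one of them from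
  \<open>\<E>_Y(u)\<close> leaves a star centred at the other, hence \<open>\<C>\<^sup>-_Y(u) = \<emptyset>\<close> for every non-empty
  \<open>u\<close>, without using that \<open>u\<close> or \<open>v\<close> is dendric or bispecial. Consequently
  \<open>\<C>\<^sup>-(Y) = \<C>\<^sup>-_Y(\<epsilon>)\<close>, and a cut vertex of \<open>\<E>_Y(\<epsilon>)\<close> is read off the explicit list of
  two-letter factors. The right-hand side is symmetric.\<close>

lemma lang_iff: "w \<in> lang Z \<longleftrightarrow> (\<exists>z\<in>Z. \<exists>i. \<forall>j<length w. w ! j = z (i + int j))"
proof -
  have "w = map f [0..<length w] \<longleftrightarrow> (\<forall>j<length w. w ! j = f j)" for f :: "nat \<Rightarrow> nat"
  proof
    assume "\<forall>j<length w. w ! j = f j"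
    then show "w = map f [0..<length w]" by (intro nth_equalityI) simp_all
  next
    assume eq: "w = map f [0..<length w]"
    show "\<forall>j<length w. w ! j = f j"
    proof (intro allI impI)
      fix j assume "j < length w"
      then show "w ! j = f j" using nth_map_upt[of j "length w" 0 f] arg_cong[OF eq, of "\<lambda>l. l ! j"]
        by simp
    qed
  qed
  then show ?thesis by (simp only: lang_def mem_Collect_eq)
qed

lemma lang_appendD1: "u @ v \<in> lang Z \<Longrightarrow> u \<in> lang Z"
proof -
  assume "u @ v \<in> lang Z"
  then obtain z i where "z \<in> Z" and uv: "\<forall>j<length (u @ v). (u @ v) ! j = z (i + int j)"
    unfolding lang_iff by blast
  have "\<forall>j<length u. u ! j = z (i + int j)"
  proof (intro allI impI)
    fix j assume "j < length u"
    then show "u ! j = z (i + int j)" using uv[rule_format, of j] by (simp add: nth_append)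
  qed
  with \<open>z \<in> Z\<close> show ?thesis unfolding lang_iff by blast
qed

lemma lang_appendD2: "u @ v \<in> lang Z \<Longrightarrow> v \<in> lang Z"
proof -
  assume "u @ v \<in> lang Z"
  then obtain z i where "z \<in> Z" and uv: "\<forall>j<length (u @ v). (u @ v) ! j = z (i + int j)"
    unfolding lang_iff by blast
  have "\<forall>j<length v. v ! j = z (i + int (length u) + int j)"
    using uv[rule_format, of "length u + _"] by (simp add: nth_append add.assoc)
  with \<open>z \<in> Z\<close> show ?thesis unfolding lang_iff by blast
qed

lemma nth_two_iff: "(\<forall>j<length [a, b]. [a, b] ! j = f j) \<longleftrightarrow> f 0 = a \<and> f 1 = b"
  by (auto simp: less_Suc_eq)

lemma left_ext_if_ext_edge: "a # u @ [b] \<in> lang Y \<Longrightarrow> a \<in> left_ext Y u"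
  unfolding left_ext_def using lang_appendD1[of "a # u" "[b]"] by simp

lemma right_ext_if_ext_edge: "a # u @ [b] \<in> lang Y \<Longrightarrow> b \<in> right_ext Y u"
  unfolding right_ext_def using lang_appendD2[of "[a]" "u @ [b]"] by simp

lemma left_ext_subset_two_factors: "u \<noteq> [] \<Longrightarrow> left_ext Z u \<subseteq> {a. [a, hd u] \<in> lang Z}"
  using lang_appendD1[of "[_, hd u]" "tl u"] by (auto simp: left_ext_def)

lemma right_ext_subset_two_factors: "u \<noteq> [] \<Longrightarrow> right_ext Z u \<subseteq> {b. [last u, b] \<in> lang Z}"
proof
  fix b assume "u \<noteq> []" "b \<in> right_ext Z u"
  moreover have "u @ [b] = butlast u @ [last u, b]" using \<open>u \<noteq> []\<close> by simp
  ultimately have "butlast u @ [last u, b] \<in> lang Z" by (simp add: right_ext_def)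
  then show "b \<in> {b. [last u, b] \<in> lang Z}" by (blast dest: lang_appendD2)
qed

section \<open>Cut vertices of extension graphs\<close>

lemma adj_sym: "(p, q) \<in> adj V E \<Longrightarrow> (q, p) \<in> adj V E"
  by (auto simp: adj_def)

lemma connected_graph_if_hub:
  assumes "\<And>v. v \<in> V \<Longrightarrow> v = c \<or> (v, c) \<in> adj V E"
  shows "connected_graph V E"
  unfolding connected_graph_def
proof (intro ballI)
  fix u v assume "u \<in> V" "v \<in> V"
  have "(u, c) \<in> (adj V E)\<^sup>*" using assms[OF \<open>u \<in> V\<close>] by auto
  moreover have "(c, v) \<in> (adj V E)\<^sup>*" using assms[OF \<open>v \<in> V\<close>] adj_sym[of v c] by auto
  ultimately show "(u, v) \<in> (adj V E)\<^sup>*" by (rule rtrancl_trans)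
qed

lemma not_connected_graph_if_separated:
  assumes "u \<in> V" "v \<in> V" "u \<in> S" "v \<notin> S"
    and closed: "\<And>p q. p \<in> S \<Longrightarrow> (p, q) \<in> adj V E \<Longrightarrow> q \<in> S"
  shows "\<not> connected_graph V E"
proof
  assume "connected_graph V E"
  with assms(1,2) have "(u, v) \<in> (adj V E)\<^sup>*" by (simp add: connected_graph_def)
  then have "v \<in> S" by (induction rule: rtrancl_induct) (use assms(3) closed in blast)+
  with assms(4) show False ..
qed

lemma connected_removed_if_star:
  assumes star: "\<And>e. e \<in> removed_edges E z \<Longrightarrow> (fst e = c \<or> snd e = c) \<and> c \<in> V"
  shows "connected_graph (removed_vertices V E z) (removed_edges E z)"
proof (rule connected_graph_if_hub)
  fix v assume "v \<in> removed_vertices V E z"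
  then obtain e where v: "v \<in> V - {z}" and e: "e \<in> removed_edges E z" "fst e = v \<or> snd e = v"
    unfolding removed_vertices_def by blast
  have "c \<noteq> z" "fst e = c \<or> snd e = c" "c \<in> V"
    using e(1) star[OF e(1)] by (auto simp: removed_edges_def)
  then have "c \<in> removed_vertices V E z"
    using e(1) unfolding removed_vertices_def by blast
  moreover have "v = c \<or> (v, c) \<in> removed_edges E z \<or> (c, v) \<in> removed_edges E z"
    using e \<open>fst e = c \<or> snd e = c\<close> by (cases e) auto
  ultimately show "v = c \<or> (v, c) \<in> adj (removed_vertices V E z) (removed_edges E z)"
    using \<open>v \<in> removed_vertices V E z\<close> unfolding adj_def by blast
qed

lemma C_minus_eq_empty_if_left_ext_subset:
  assumes "left_ext Y u \<subseteq> {p, q}"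
  shows "C_minus Y u = {}"
proof -
  have "connected_graph (removed_vertices (ext_vertices Y u) (ext_edges Y u) (Inl a))
      (removed_edges (ext_edges Y u) (Inl a))" if "a \<in> left_ext Y u" for a
  proof -
    define b where "b = (if a = p then q else p)"
    have star: "fst e = Inl b \<and> Inl b \<in> ext_vertices Y u"
      if removed: "e \<in> removed_edges (ext_edges Y u) (Inl a)" for e
    proof -
      obtain a' b' where e: "e = (Inl a', Inr b')" "a' # u @ [b'] \<in> lang Y" "a' \<noteq> a"
        using removed unfolding removed_edges_def ext_edges_def by force
      then have "a' \<in> left_ext Y u" by (simp add: left_ext_if_ext_edge)
      with e(3) assms \<open>a \<in> left_ext Y u\<close> have "a' = b" by (auto simp: b_def)
      with e \<open>a' \<in> left_ext Y u\<close> show ?thesis by (simp add: ext_vertices_def)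
    qed
    then show ?thesis by (intro connected_removed_if_star) blast
  qed
  then show ?thesis unfolding C_minus_def by blast
qed

lemma C_plus_eq_empty_if_right_ext_subset:
  assumes "right_ext Y u \<subseteq> {p, q}"
  shows "C_plus Y u = {}"
proof -
  have "connected_graph (removed_vertices (ext_vertices Y u) (ext_edges Y u) (Inr b))
      (removed_edges (ext_edges Y u) (Inr b))" if "b \<in> right_ext Y u" for b
  proof -
    define a where "a = (if b = p then q else p)"
    have star: "snd e = Inr a \<and> Inr a \<in> ext_vertices Y u"
      if removed: "e \<in> removed_edges (ext_edges Y u) (Inr b)" for e
    proof -
      obtain a' b' where e: "e = (Inl a', Inr b')" "a' # u @ [b'] \<in> lang Y" "b' \<noteq> b"
        using removed unfolding removed_edges_def ext_edges_def by force
      then have "b' \<in> right_ext Y u" by (simp add: right_ext_if_ext_edge)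
      with e(3) assms \<open>b \<in> right_ext Y u\<close> have "b' = a" by (auto simp: a_def)
      with e \<open>b' \<in> right_ext Y u\<close> show ?thesis by (simp add: ext_vertices_def)
    qed
    then show ?thesis by (intro connected_removed_if_star) blast
  qed
  then show ?thesis unfolding C_plus_def by blast
qed

lemma C_minusI:
  assumes "a0 \<in> left_ext Y w"
    and edge1: "a # w @ [b] \<in> lang Y" "a \<noteq> a0" "a \<in> L"
    and edge2: "a' # w @ [b'] \<in> lang Y" "a' \<noteq> a0" "a' \<notin> L"
    and split: "\<And>x y. x # w @ [y] \<in> lang Y \<Longrightarrow> x \<noteq> a0 \<Longrightarrow> x \<in> L \<longleftrightarrow> y \<in> R"
  shows "a0 \<in> C_minus Y w"
proof -
  let ?V = "removed_vertices (ext_vertices Y w) (ext_edges Y w) (Inl a0)"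
  let ?E = "removed_edges (ext_edges Y w) (Inl a0)"
  have vertex: "Inl x \<in> ?V" if "x # w @ [y] \<in> lang Y" "x \<noteq> a0" for x y
  proof -
    have "(Inl x, Inr y) \<in> ?E" using that by (simp add: removed_edges_def ext_edges_def)
    moreover have "Inl x \<in> ext_vertices Y w"
      using left_ext_if_ext_edge[OF that(1)] by (simp add: ext_vertices_def)
    ultimately show ?thesis using that(2) unfolding removed_vertices_def by force
  qed
  have "\<not> connected_graph ?V ?E"
  proof (rule not_connected_graph_if_separated)
    show "Inl a \<in> ?V" "Inl a' \<in> ?V" using vertex edge1 edge2 by blast+
    show "Inl a \<in> Inl ` L \<union> Inr ` R" "Inl a' \<notin> Inl ` L \<union> Inr ` R" using edge1 edge2 by auto
    show "q \<in> Inl ` L \<union> Inr ` R" if "p \<in> Inl ` L \<union> Inr ` R" "(p, q) \<in> adj ?V ?E" for p q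
      using that split unfolding adj_def removed_edges_def ext_edges_def by auto
  qed
  with assms(1) show ?thesis unfolding C_minus_def by blast
qed

lemma C_plusI:
  assumes "b0 \<in> right_ext Y w"
    and edge1: "a # w @ [b] \<in> lang Y" "b \<noteq> b0" "a \<in> L"
    and edge2: "a' # w @ [b'] \<in> lang Y" "b' \<noteq> b0" "a' \<notin> L"
    and split: "\<And>x y. x # w @ [y] \<in> lang Y \<Longrightarrow> y \<noteq> b0 \<Longrightarrow> x \<in> L \<longleftrightarrow> y \<in> R"
  shows "b0 \<in> C_plus Y w"
proof -
  let ?V = "removed_vertices (ext_vertices Y w) (ext_edges Y w) (Inr b0)"
  let ?E = "removed_edges (ext_edges Y w) (Inr b0)"
  have vertex: "Inl x \<in> ?V" if "x # w @ [y] \<in> lang Y" "y \<noteq> b0" for x y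
  proof -
    have "(Inl x, Inr y) \<in> ?E" using that by (simp add: removed_edges_def ext_edges_def)
    moreover have "Inl x \<in> ext_vertices Y w"
      using left_ext_if_ext_edge[OF that(1)] by (simp add: ext_vertices_def)
    ultimately show ?thesis unfolding removed_vertices_def by force
  qed
  have "\<not> connected_graph ?V ?E"
  proof (rule not_connected_graph_if_separated)
    show "Inl a \<in> ?V" "Inl a' \<in> ?V" using vertex edge1 edge2 by blast+
    show "Inl a \<in> Inl ` L \<union> Inr ` R" "Inl a' \<notin> Inl ` L \<union> Inr ` R" using edge1 edge2 by auto
    show "q \<in> Inl ` L \<union> Inr ` R" if "p \<in> Inl ` L \<union> Inr ` R" "(p, q) \<in> adj ?V ?E" for p q
      using that split unfolding adj_def removed_edges_def ext_edges_def by auto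
  qed
  with assms(1) show ?thesis unfolding C_plus_def by blast
qed

lemma C_minus_all_eq_Nil:
  assumes "\<And>u. u \<noteq> [] \<Longrightarrow> C_minus Y u = {}"
  shows "C_minus_all Y = C_minus Y []"
  unfolding C_minus_all_def
proof (intro equalityI subsetI)
  fix a assume "a \<in> (\<Union>w\<in>lang Y. C_minus Y w)"
  then obtain w where "a \<in> C_minus Y w" by blast
  with assms show "a \<in> C_minus Y []" by (cases "w = []") auto
next
  fix a assume "a \<in> C_minus Y []"
  then have "[] \<in> lang Y"
    using lang_appendD1[of "[]" "[a]"] by (simp add: C_minus_def left_ext_def)
  with \<open>a \<in> C_minus Y []\<close> show "a \<in> (\<Union>w\<in>lang Y. C_minus Y w)" by blast
qed

lemma C_plus_all_eq_Nil:
  assumes "\<And>u. u \<noteq> [] \<Longrightarrow> C_plus Y u = {}"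
  shows "C_plus_all Y = C_plus Y []"
  unfolding C_plus_all_def
proof (intro equalityI subsetI)
  fix a assume "a \<in> (\<Union>w\<in>lang Y. C_plus Y w)"
  then obtain w where "a \<in> C_plus Y w" by blast
  with assms show "a \<in> C_plus Y []" by (cases "w = []") auto
next
  fix a assume "a \<in> C_plus Y []"
  then have "[] \<in> lang Y"
    using lang_appendD1[of "[]" "[a]"] by (simp add: C_plus_def right_ext_def)
  with \<open>a \<in> C_plus Y []\<close> show "a \<in> (\<Union>w\<in>lang Y. C_plus Y w)" by blast
qed

section \<open>Positions of the blocks of a morphic image\<close>

definition block_start :: "(int \<Rightarrow> nat) \<Rightarrow> int \<Rightarrow> int" where
  "block_start L n =
     (if 0 \<le> n then (\<Sum>i\<in>{0..<n}. int (L i)) else - (\<Sum>i\<in>{n..<0}. int (L i)))"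

lemma block_start_0 [simp]: "block_start L 0 = 0"
  by (simp add: block_start_def)

lemma block_start_step: "block_start L (n + 1) = block_start L n + int (L n)"
proof (cases "0 \<le> n")
  case True
  then have "{0..<n + 1} = insert n {0..<n}" by auto
  with True show ?thesis by (simp add: block_start_def)
next
  case False
  then have "{n..<0} = insert n {n + 1..<0}" by auto
  with False show ?thesis by (simp add: block_start_def)
qed

lemma block_start_mono: "n < n' \<Longrightarrow> block_start L (n + 1) \<le> block_start L n'"
proof (induction n' rule: int_gr_induct)
  case (step i)
  then show ?case using block_start_step[of L i] by linarith
qed simp

lemma block_start_inj:
  assumes "j < L n" "j' < L n'" "block_start L n + int j = block_start L n' + int j'"
  shows "n = n' \<and> j = j'"
proof -
  have "\<not> n < n'" "\<not> n' < n"
    using block_start_mono[of n n' L] block_start_mono[of n' n L] assms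
      block_start_step[of L n] block_start_step[of L n'] by linarith+
  with assms show ?thesis by simp
qed

lemma block_start_cover:
  assumes "\<And>n. 0 < L n"
  shows "\<exists>n j. j < L n \<and> m = block_start L n + int j"
proof -
  have "\<exists>n. block_start L n \<le> m \<and> m < block_start L (n + 1)"
  proof (induction m rule: int_induct[where k = 0])
    case base
    show ?case using assms[of 0] block_start_step[of L 0] by (intro exI[of _ 0]) simp
  next
    case (step1 m)
    then obtain n where "block_start L n \<le> m" "m < block_start L (n + 1)" by blast
    then have "block_start L n \<le> m + 1 \<and> m + 1 < block_start L (n + 1) \<or>
        block_start L (n + 1) \<le> m + 1 \<and> m + 1 < block_start L (n + 1 + 1)"
      using block_start_step[of L "n + 1"] assms[of "n + 1"] by linarith
    then show ?case by blast
  next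
    case (step2 m)
    then obtain n where "block_start L n \<le> m" "m < block_start L (n + 1)" by blast
    then have "block_start L n \<le> m - 1 \<and> m - 1 < block_start L (n + 1) \<or>
        block_start L (n - 1) \<le> m - 1 \<and> m - 1 < block_start L (n - 1 + 1)"
      using block_start_step[of L "n - 1"] assms[of "n - 1"] by simp linarith
    then show ?case by blast
  qed
  then obtain n where "block_start L n \<le> m" "m < block_start L (n + 1)" by blast
  then have "nat (m - block_start L n) < L n \<and> m = block_start L n + int (nat (m - block_start L n))"
    using block_start_step[of L n] by linarith
  then show ?thesis by blast
qed

lemma block_start_unique:
  assumes "c 0 = 0" and "\<And>n. c (n + 1) = c n + int (L n)"
  shows "c = block_start L"
proof
  fix m
  show "c m = block_start L m"
  proof (induction m rule: int_induct[where k = 0])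
    case (step2 m)
    then show ?case using assms(2)[of "m - 1"] block_start_step[of L "m - 1"] by simp
  qed (simp_all add: assms block_start_step)
qed

lemma block_start_ex1:
  assumes "\<And>n. 0 < L n"
  shows "\<exists>!(n, j). j < L n \<and> m = block_start L n + int j"
proof -
  obtain n j where "j < L n" "m = block_start L n + int j"
    using block_start_cover[of L, OF assms] by blast
  then show ?thesis using block_start_inj[of _ L] by (intro ex1I[of _ "(n, j)"]) auto
qed

text \<open>The description in \<open>morph_seq\<close> is proper: its position function can only be
  \<open>block_start\<close>, and these blocks tile \<open>\<int>\<close>.\<close>

lemma morph_seq_block:
  assumes nonempty: "\<And>n. \<sigma> (x n) \<noteq> []" and j: "j < length (\<sigma> (x n))"
  shows "morph_seq \<sigma> x (block_start (\<lambda>n. length (\<sigma> (x n))) n + int j) = \<sigma> (x n) ! j"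
proof -
  define L where "L = (\<lambda>n. length (\<sigma> (x n)))"
  have L_eq: "length (\<sigma> (x n)) = L n" for n by (simp add: L_def)
  have pos: "0 < L n" for n using nonempty by (simp add: L_def)
  define y where
    "y m = (case THE (n, j). j < L n \<and> m = block_start L n + int j of (n, j) \<Rightarrow> \<sigma> (x n) ! j)"
    for m
  have y_block: "y (block_start L n + int j) = \<sigma> (x n) ! j" if "j < L n" for n j
  proof -
    have "(THE (n', j'). j' < L n' \<and> block_start L n + int j = block_start L n' + int j') = (n, j)"
      using block_start_ex1[OF pos] that by (intro the1_equality) auto
    then show ?thesis by (simp add: y_def)
  qed
  have "morph_seq \<sigma> x = y"
    unfolding morph_seq_def L_eq
  proof (rule the_equality)
    show "\<exists>c. c 0 = 0 \<and> (\<forall>n. c (n + 1) = c n + int (L n)) \<and>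
        (\<forall>n j. j < L n \<longrightarrow> y (c n + int j) = \<sigma> (x n) ! j)"
      using y_block block_start_step by (intro exI[of _ "block_start L"]) simp
  next
    fix y' assume "\<exists>c. c 0 = 0 \<and> (\<forall>n. c (n + 1) = c n + int (L n)) \<and>
        (\<forall>n j. j < L n \<longrightarrow> y' (c n + int j) = \<sigma> (x n) ! j)"
    then obtain c where c: "c 0 = 0" "\<And>n. c (n + 1) = c n + int (L n)"
      and y': "\<And>n j. j < L n \<Longrightarrow> y' (c n + int j) = \<sigma> (x n) ! j"
      by blast
    from c have "c = block_start L" by (rule block_start_unique)
    show "y' = y"
    proof
      fix m
      obtain n j where "j < L n" "m = block_start L n + int j"
        using block_start_cover[of L, OF pos] by blast
      then show "y' m = y m" using y' y_block \<open>c = block_start L\<close> by simp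
    qed
  qed
  then show ?thesis using y_block j by (simp add: L_def)
qed

section \<open>Two-letter factors of the image shift\<close>

lemma shiftS_funpow: "(shiftS ^^ k) y i = y (i + int k)"
  by (induction k arbitrary: i) (simp_all add: shiftS_def ac_simps)

lemma lang_image_shift_iff:
  assumes "\<And>x. x \<in> X \<Longrightarrow> \<sigma> (x 0) \<noteq> []"
  shows "w \<in> lang (image_shift \<sigma> X) \<longleftrightarrow>
    (\<exists>x\<in>X. \<exists>i. \<forall>j<length w. w ! j = morph_seq \<sigma> x (i + int j))"
proof
  assume "w \<in> lang (image_shift \<sigma> X)"
  then obtain z i where "z \<in> image_shift \<sigma> X" and w: "\<forall>j<length w. w ! j = z (i + int j)"
    unfolding lang_iff by blast
  then obtain x k where "x \<in> X" and "z = (shiftS ^^ k) (morph_seq \<sigma> x)"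
    unfolding image_shift_def by blast
  with w show "\<exists>x\<in>X. \<exists>i. \<forall>j<length w. w ! j = morph_seq \<sigma> x (i + int j)"
    by (intro bexI[of _ x] exI[of _ "i + int k"]) (simp_all add: shiftS_funpow ac_simps)
next
  assume "\<exists>x\<in>X. \<exists>i. \<forall>j<length w. w ! j = morph_seq \<sigma> x (i + int j)"
  moreover have "morph_seq \<sigma> x \<in> image_shift \<sigma> X" if "x \<in> X" for x
    unfolding image_shift_def using assms[OF that]
    by (intro CollectI exI[of _ x] exI[of _ 0]) (simp add: that)
  ultimately show "w \<in> lang (image_shift \<sigma> X)" unfolding lang_iff by blast
qed

lemma shift_space_letters: "shift_space X \<Longrightarrow> x \<in> X \<Longrightarrow> x n \<in> A3"
  by (simp add: shift_space_def)

lemma shift_space_occurs: "shift_space X \<Longrightarrow> a \<in> A3 \<Longrightarrow> \<exists>x\<in>X. \<exists>n. x n = a"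
  by (simp add: shift_space_def)

lemma in_set_zip_tl_iff:
  "(a, b) \<in> set (zip xs (tl xs)) \<longleftrightarrow> (\<exists>j. Suc j < length xs \<and> a = xs ! j \<and> b = xs ! Suc j)"
  by (force simp: set_zip nth_tl)

definition morph_two_factors :: "morph \<Rightarrow> (nat \<times> nat) set" where
  "morph_two_factors \<sigma> =
     (\<Union>c\<in>A3. set (zip (\<sigma> c) (tl (\<sigma> c)))) \<union> (\<lambda>c. (last (\<sigma> c), 1)) ` A3"

lemma morph_seq_two_factor:
  assumes letters: "\<And>n. x n \<in> A3" and nonempty: "\<And>a. a \<in> A3 \<Longrightarrow> \<sigma> a \<noteq> []"
    and hd_one: "\<And>a. a \<in> A3 \<Longrightarrow> hd (\<sigma> a) = 1"
  shows "(morph_seq \<sigma> x m, morph_seq \<sigma> x (m + 1)) \<in> morph_two_factors \<sigma>"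
proof -
  define L where "L = (\<lambda>n. length (\<sigma> (x n)))"
  have nonempty_x: "\<sigma> (x n) \<noteq> []" for n using nonempty letters by blast
  then have "0 < L n" for n by (simp add: L_def)
  then obtain n j where j: "j < L n" and m: "m = block_start L n + int j"
    using block_start_cover[of L] by blast
  have a: "morph_seq \<sigma> x m = \<sigma> (x n) ! j"
    using morph_seq_block[of \<sigma> x, OF nonempty_x] j m by (simp add: L_def)
  show ?thesis
  proof (cases "Suc j < L n")
    case True
    have "morph_seq \<sigma> x (m + 1) = \<sigma> (x n) ! Suc j"
      using morph_seq_block[of \<sigma> x, OF nonempty_x, of "Suc j" n] True m by (simp add: L_def ac_simps)
    with a True have
      "(morph_seq \<sigma> x m, morph_seq \<sigma> x (m + 1)) \<in> set (zip (\<sigma> (x n)) (tl (\<sigma> (x n))))"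
      by (auto simp: in_set_zip_tl_iff L_def)
    with letters show ?thesis unfolding morph_two_factors_def by blast
  next
    case False
    with j have "Suc j = L n" by simp
    then have "j = length (\<sigma> (x n)) - 1" by (simp add: L_def)
    with a nonempty_x[of n] have "morph_seq \<sigma> x m = last (\<sigma> (x n))"
      by (simp add: last_conv_nth)
    moreover have "m + 1 = block_start L (n + 1) + int 0"
      using \<open>Suc j = L n\<close> m block_start_step[of L n] by simp
    then have "morph_seq \<sigma> x (m + 1) = hd (\<sigma> (x (n + 1)))"
      using morph_seq_block[of \<sigma> x, OF nonempty_x, of 0 "n + 1"] nonempty_x[of "n + 1"]
      by (simp add: L_def hd_conv_nth)
    ultimately show ?thesis
      using hd_one letters unfolding morph_two_factors_def by auto
  qed
qed

lemma morph_two_factor_occurs: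
  assumes X: "shift_space X" and nonempty: "\<And>a. a \<in> A3 \<Longrightarrow> \<sigma> a \<noteq> []"
    and hd_one: "\<And>a. a \<in> A3 \<Longrightarrow> hd (\<sigma> a) = 1"
    and ab: "(a, b) \<in> morph_two_factors \<sigma>"
  shows "\<exists>x\<in>X. \<exists>m. morph_seq \<sigma> x m = a \<and> morph_seq \<sigma> x (m + 1) = b"
proof -
  obtain d where d: "d \<in> A3"
    and inner_or_last: "(a, b) \<in> set (zip (\<sigma> d) (tl (\<sigma> d))) \<or> a = last (\<sigma> d) \<and> b = 1"
    using ab unfolding morph_two_factors_def by blast
  obtain x n where x: "x \<in> X" "x n = d" using shift_space_occurs[OF X d] by blast
  define L where "L = (\<lambda>n. length (\<sigma> (x n)))"
  have nonempty_x: "\<sigma> (x n) \<noteq> []" for n using nonempty shift_space_letters[OF X x(1)] by blast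
  note block = morph_seq_block[of \<sigma> x, OF nonempty_x, folded L_def]
  from inner_or_last show ?thesis
  proof
    assume "(a, b) \<in> set (zip (\<sigma> d) (tl (\<sigma> d)))"
    then obtain j where "Suc j < length (\<sigma> d)" "a = \<sigma> d ! j" "b = \<sigma> d ! Suc j"
      by (auto simp: in_set_zip_tl_iff)
    then show ?thesis
      using block[of j n] block[of "Suc j" n] x
      by (intro bexI[of _ x] exI[of _ "block_start L n + int j"]) (auto simp: ac_simps)
  next
    assume last_one: "a = last (\<sigma> d) \<and> b = 1"
    obtain k where k: "L n = Suc k" using nonempty_x[of n] by (cases "L n") (auto simp: L_def)
    define m where "m = block_start L n + int k"
    have first: "morph_seq \<sigma> x m = a"
      using block[of k n] k last_one x(2) nonempty_x[of n] by (simp add: m_def L_def last_conv_nth)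
    have "m + 1 = block_start L (n + 1) + int 0"
      using block_start_step[of L n] k by (simp add: m_def)
    then have "morph_seq \<sigma> x (m + 1) = hd (\<sigma> (x (n + 1)))"
      using block[of 0 "n + 1"] nonempty_x[of "n + 1"] by (simp add: L_def hd_conv_nth)
    also have "\<dots> = b"
      using hd_one[OF shift_space_letters[OF X x(1)]] last_one by simp
    finally show ?thesis using first x(1) by blast
  qed
qed

lemma two_factor_image_shift_iff:
  assumes X: "shift_space X" and nonempty: "\<And>a. a \<in> A3 \<Longrightarrow> \<sigma> a \<noteq> []"
    and hd_one: "\<And>a. a \<in> A3 \<Longrightarrow> hd (\<sigma> a) = 1"
  shows "[a, b] \<in> lang (image_shift \<sigma> X) \<longleftrightarrow> (a, b) \<in> morph_two_factors \<sigma>"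
proof -
  have start_nonempty: "\<sigma> (x 0) \<noteq> []" if "x \<in> X" for x
    using nonempty shift_space_letters[OF X that] by blast
  have "[a, b] \<in> lang (image_shift \<sigma> X) \<longleftrightarrow>
      (\<exists>x\<in>X. \<exists>i. \<forall>j<length [a, b]. [a, b] ! j = morph_seq \<sigma> x (i + int j))"
    by (rule lang_image_shift_iff[OF start_nonempty])
  also have "\<dots> \<longleftrightarrow> (\<exists>x\<in>X. \<exists>m. morph_seq \<sigma> x m = a \<and> morph_seq \<sigma> x (m + 1) = b)"
    unfolding nth_two_iff by simp
  also have "\<dots> \<longleftrightarrow> (a, b) \<in> morph_two_factors \<sigma>"
  proof
    assume "\<exists>x\<in>X. \<exists>m. morph_seq \<sigma> x m = a \<and> morph_seq \<sigma> x (m + 1) = b"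
    then obtain x m where "x \<in> X" "morph_seq \<sigma> x m = a" "morph_seq \<sigma> x (m + 1) = b" by blast
    with morph_seq_two_factor[of x \<sigma> m] shift_space_letters[OF X] nonempty hd_one
    show "(a, b) \<in> morph_two_factors \<sigma>" by blast
  qed (rule morph_two_factor_occurs[OF X nonempty hd_one])
  finally show ?thesis .
qed

section \<open>The morphisms of S_3\<close>

lemma left_invariantI:
  assumes "\<And>a1 a2. a1 \<in> A3 \<Longrightarrow> a2 \<in> A3 \<Longrightarrow> a1 \<noteq> a2 \<Longrightarrow> lcs (\<sigma> a1) (\<sigma> a2) = t"
  shows "left_invariant \<sigma>"
proof -
  have "lcs (\<sigma> 1) (\<sigma> 2) \<in> T_minus \<sigma>"
    unfolding T_minus_def A3_def by (intro CollectI exI[of _ "1::nat"] exI[of _ "2::nat"]) simp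
  moreover have "T_minus \<sigma> \<subseteq> {t}" using assms unfolding T_minus_def by blast
  ultimately have "T_minus \<sigma> = {t}" by blast
  then show ?thesis unfolding left_invariant_def by blast
qed

lemma right_invariantI:
  assumes "\<And>b1 b2. b1 \<in> A3 \<Longrightarrow> b2 \<in> A3 \<Longrightarrow> b1 \<noteq> b2 \<Longrightarrow> lcp (\<sigma> b1) (\<sigma> b2) = t"
  shows "right_invariant \<sigma>"
proof -
  have "lcp (\<sigma> 1) (\<sigma> 2) \<in> T_plus \<sigma>"
    unfolding T_plus_def A3_def by (intro CollectI exI[of _ "1::nat"] exI[of _ "2::nat"]) simp
  moreover have "T_plus \<sigma> \<subseteq> {t}" using assms unfolding T_plus_def by blast
  ultimately have "T_plus \<sigma> = {t}" by blast
  then show ?thesis unfolding right_invariant_def by blast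
qed

lemma left_invariant_alpha: "left_invariant alpha"
  by (rule left_invariantI[of _ "[]"]) (auto simp: A3_def alpha_def lcs_def)

lemma left_invariant_gamma: "left_invariant gamma"
  by (rule left_invariantI[of _ "[]"]) (auto simp: A3_def gamma_def lcs_def)

lemma right_invariant_alpha: "right_invariant alpha"
  by (rule right_invariantI[of _ "[1]"]) (auto simp: A3_def alpha_def)

lemma right_invariant_beta: "right_invariant beta"
  by (rule right_invariantI[of _ "[1]"]) (auto simp: A3_def beta_def)

lemma morph_two_factors_beta: "morph_two_factors beta = {(1,1), (1,2), (1,3), (2,1), (3,2)}"
  by (auto simp: morph_two_factors_def A3_def beta_def)

lemma morph_two_factors_gamma: "morph_two_factors gamma = {(1,1), (1,2), (2,1), (2,3), (3,1)}"
  by (auto simp: morph_two_factors_def A3_def gamma_def)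

lemma morph_two_factors_eta: "morph_two_factors eta = {(1,2), (1,3), (2,1), (2,3), (3,1)}"
  by (auto simp: morph_two_factors_def A3_def eta_def)

lemma morph_two_factors_delta:
  assumes "k \<ge> 1" shows "morph_two_factors (delta k) = {(1,1), (1,2), (2,3), (3,1), (3,3)}"
proof -
  obtain k' where k: "k = Suc k'" using assms by (cases k) auto
  have "delta k 1 = [1]" "delta k 2 = 1 # 2 # replicate k 3" "delta k 3 = 1 # 2 # replicate (Suc k) 3"
    by (simp_all add: delta_def)
  then show ?thesis
    by (auto simp: morph_two_factors_def A3_def k dest: set_zip_leftD set_zip_rightD)
qed

lemma morph_two_factors_zeta:
  assumes "k \<ge> 1" shows "morph_two_factors (zeta k) = {(1,2), (1,3), (2,1), (3,1), (3,3)}"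
proof -
  obtain k' where k: "k = Suc k'" using assms by (cases k) auto
  have "zeta k 1 = 1 # replicate k 3" "zeta k 2 = [1, 2]" "zeta k 3 = 1 # replicate (Suc k) 3"
    by (simp_all add: zeta_def)
  then show ?thesis
    by (auto simp: morph_two_factors_def A3_def k dest: set_zip_leftD set_zip_rightD)
qed

lemma S3_image_props: "\<sigma> \<in> S3 \<Longrightarrow> a \<in> A3 \<Longrightarrow> \<sigma> a \<noteq> [] \<and> hd (\<sigma> a) = 1"
  by (auto simp: S3_def A3_def alpha_def beta_def gamma_def delta_def zeta_def eta_def)

lemma S3_two_factor_iff:
  "shift_space X \<Longrightarrow> \<sigma> \<in> S3 \<Longrightarrow>
    [a, b] \<in> lang (image_shift \<sigma> X) \<longleftrightarrow> (a, b) \<in> morph_two_factors \<sigma>"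
  using two_factor_image_shift_iff S3_image_props by blast

lemma S3_not_left_invariant_two_factors:
  assumes "\<sigma> \<in> S3" "\<not> left_invariant \<sigma>"
  obtains "morph_two_factors \<sigma> = {(1,1), (1,2), (1,3), (2,1), (3,2)}"
    | "morph_two_factors \<sigma> = {(1,2), (1,3), (2,1), (2,3), (3,1)}"
    | "morph_two_factors \<sigma> = {(1,1), (1,2), (2,3), (3,1), (3,3)}"
    | "morph_two_factors \<sigma> = {(1,2), (1,3), (2,1), (3,1), (3,3)}"
proof -
  have "\<sigma> = beta \<or> \<sigma> = eta \<or> (\<exists>k\<ge>1. \<sigma> = delta k) \<or> (\<exists>k\<ge>1. \<sigma> = zeta k)"
    using assms left_invariant_alpha left_invariant_gamma unfolding S3_def by blast
  then show thesis
  proof (elim disjE exE conjE)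
    show "\<sigma> = beta \<Longrightarrow> thesis" by (rule that(1)) (simp add: morph_two_factors_beta)
    show "\<sigma> = eta \<Longrightarrow> thesis" by (rule that(2)) (simp add: morph_two_factors_eta)
    show "k \<ge> 1 \<Longrightarrow> \<sigma> = delta k \<Longrightarrow> thesis" for k
      by (rule that(3)) (simp add: morph_two_factors_delta)
    show "k \<ge> 1 \<Longrightarrow> \<sigma> = zeta k \<Longrightarrow> thesis" for k
      by (rule that(4)) (simp add: morph_two_factors_zeta)
  qed
qed

lemma S3_not_right_invariant_two_factors:
  assumes "\<sigma> \<in> S3" "\<not> right_invariant \<sigma>"
  obtains "morph_two_factors \<sigma> = {(1,1), (1,2), (2,1), (2,3), (3,1)}"
    | "morph_two_factors \<sigma> = {(1,2), (1,3), (2,1), (2,3), (3,1)}"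
    | "morph_two_factors \<sigma> = {(1,1), (1,2), (2,3), (3,1), (3,3)}"
    | "morph_two_factors \<sigma> = {(1,2), (1,3), (2,1), (3,1), (3,3)}"
proof -
  have "\<sigma> = gamma \<or> \<sigma> = eta \<or> (\<exists>k\<ge>1. \<sigma> = delta k) \<or> (\<exists>k\<ge>1. \<sigma> = zeta k)"
    using assms right_invariant_alpha right_invariant_beta unfolding S3_def by blast
  then show thesis
  proof (elim disjE exE conjE)
    show "\<sigma> = gamma \<Longrightarrow> thesis" by (rule that(1)) (simp add: morph_two_factors_gamma)
    show "\<sigma> = eta \<Longrightarrow> thesis" by (rule that(2)) (simp add: morph_two_factors_eta)
    show "k \<ge> 1 \<Longrightarrow> \<sigma> = delta k \<Longrightarrow> thesis" for k
      by (rule that(3)) (simp add: morph_two_factors_delta)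
    show "k \<ge> 1 \<Longrightarrow> \<sigma> = zeta k \<Longrightarrow> thesis" for k
      by (rule that(4)) (simp add: morph_two_factors_zeta)
  qed
qed

lemma left_neighbours_not_left_invariant:
  assumes "\<sigma> \<in> S3" "\<not> left_invariant \<sigma>"
  shows "\<exists>p q. {a. (a, b) \<in> morph_two_factors \<sigma>} \<subseteq> {p, q}"
  using assms
proof (cases rule: S3_not_left_invariant_two_factors)
  case 1
  then have "{a. (a, b) \<in> morph_two_factors \<sigma>} \<subseteq> {1, if b = 1 then 2 else 3}"
    by auto
  then show ?thesis by blast
next
  case 2
  then have "{a. (a, b) \<in> morph_two_factors \<sigma>} \<subseteq> {if b = 1 then 3 else 1, 2}"
    by auto
  then show ?thesis by blast
next
  case 3
  then have "{a. (a, b) \<in> morph_two_factors \<sigma>} \<subseteq> {if b = 3 then 2 else 1, 3}"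
    by auto
  then show ?thesis by blast
next
  case 4
  then have "{a. (a, b) \<in> morph_two_factors \<sigma>} \<subseteq> {if b = 1 then 2 else 1, 3}"
    by auto
  then show ?thesis by blast
qed

lemma right_neighbours_not_right_invariant:
  assumes "\<sigma> \<in> S3" "\<not> right_invariant \<sigma>"
  shows "\<exists>p q. {b. (a, b) \<in> morph_two_factors \<sigma>} \<subseteq> {p, q}"
  using assms
proof (cases rule: S3_not_right_invariant_two_factors)
  case 1
  then have "{b. (a, b) \<in> morph_two_factors \<sigma>} \<subseteq> {1, if a = 1 then 2 else 3}"
    by auto
  then show ?thesis by blast
next
  case 2
  then have "{b. (a, b) \<in> morph_two_factors \<sigma>} \<subseteq> {if a = 1 then 2 else 1, 3}"
    by auto
  then show ?thesis by blast
next
  case 3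
  then have "{b. (a, b) \<in> morph_two_factors \<sigma>} \<subseteq> {1, if a = 1 then 2 else 3}"
    by auto
  then show ?thesis by blast
next
  case 4
  then have "{b. (a, b) \<in> morph_two_factors \<sigma>} \<subseteq> {if a = 1 then 2 else 1, 3}"
    by auto
  then show ?thesis by blast
qed

lemma C_minus_image_shift_Nil_nonempty:
  assumes X: "shift_space X" and S: "\<sigma> \<in> S3" and "\<not> left_invariant \<sigma>"
  shows "C_minus (image_shift \<sigma> X) [] \<noteq> {}"
proof -
  let ?Y = "image_shift \<sigma> X"
  note edge_iff = S3_two_factor_iff[OF X S]
  have left: "a \<in> left_ext ?Y []" if "(a, b) \<in> morph_two_factors \<sigma>" for a b
    using left_ext_if_ext_edge[of a "[]" b ?Y] that edge_iff by simp
  from S \<open>\<not> left_invariant \<sigma>\<close> show ?thesis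
  proof (cases rule: S3_not_left_invariant_two_factors)
    case 1
    have "1 \<in> C_minus ?Y []"
      by (intro C_minusI[where a = 2 and b = 1 and a' = 3 and b' = 2 and L = "{2}" and R = "{1}"]
          left[of _ 1]) (auto simp: edge_iff 1)
    then show ?thesis by blast
  next
    case 2
    have "2 \<in> C_minus ?Y []"
      by (intro C_minusI[where a = 3 and b = 1 and a' = 1 and b' = 3 and L = "{3}" and R = "{1}"]
          left[of _ 1]) (auto simp: edge_iff 2)
    then show ?thesis by blast
  next
    case 3
    have "3 \<in> C_minus ?Y []"
      by (intro C_minusI[where a = 2 and b = 3 and a' = 1 and b' = 2 and L = "{2}" and R = "{3}"]
          left[of _ 1]) (auto simp: edge_iff 3)
    then show ?thesis by blast
  next
    case 4
    have "3 \<in> C_minus ?Y []"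
      by (intro C_minusI[where a = 2 and b = 1 and a' = 1 and b' = 3 and L = "{2}" and R = "{1}"]
          left[of _ 1]) (auto simp: edge_iff 4)
    then show ?thesis by blast
  qed
qed

lemma C_plus_image_shift_Nil_nonempty:
  assumes X: "shift_space X" and S: "\<sigma> \<in> S3" and "\<not> right_invariant \<sigma>"
  shows "C_plus (image_shift \<sigma> X) [] \<noteq> {}"
proof -
  let ?Y = "image_shift \<sigma> X"
  note edge_iff = S3_two_factor_iff[OF X S]
  have right: "b \<in> right_ext ?Y []" if "(a, b) \<in> morph_two_factors \<sigma>" for a b
    using right_ext_if_ext_edge[of a "[]" b ?Y] that edge_iff by simp
  from S \<open>\<not> right_invariant \<sigma>\<close> show ?thesis
  proof (cases rule: S3_not_right_invariant_two_factors)
    case 1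
    have "1 \<in> C_plus ?Y []"
      by (intro C_plusI[where a = 1 and b = 2 and a' = 2 and b' = 3 and L = "{1}" and R = "{2}"]
          right[of 1]) (auto simp: edge_iff 1)
    then show ?thesis by blast
  next
    case 2
    have "3 \<in> C_plus ?Y []"
      by (intro C_plusI[where a = 1 and b = 2 and a' = 2 and b' = 1 and L = "{1}" and R = "{2}"]
          right[of 1]) (auto simp: edge_iff 2)
    then show ?thesis by blast
  next
    case 3
    have "1 \<in> C_plus ?Y []"
      by (intro C_plusI[where a = 1 and b = 2 and a' = 2 and b' = 3 and L = "{1}" and R = "{2}"]
          right[of 1]) (auto simp: edge_iff 3)
    then show ?thesis by blast
  next
    case 4
    have "3 \<in> C_plus ?Y []"
      by (intro C_plusI[where a = 1 and b = 2 and a' = 2 and b' = 1 and L = "{1}" and R = "{2}"]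
          right[of 1]) (auto simp: edge_iff 4)
    then show ?thesis by blast
  qed
qed

lemma C_minus_image_shift_eq_empty:
  assumes X: "shift_space X" and S: "\<sigma> \<in> S3" and "\<not> left_invariant \<sigma>" and "u \<noteq> []"
  shows "C_minus (image_shift \<sigma> X) u = {}"
proof -
  obtain p q where "{a. (a, hd u) \<in> morph_two_factors \<sigma>} \<subseteq> {p, q}"
    using left_neighbours_not_left_invariant[OF S \<open>\<not> left_invariant \<sigma>\<close>] by blast
  then have "left_ext (image_shift \<sigma> X) u \<subseteq> {p, q}"
    using left_ext_subset_two_factors[OF \<open>u \<noteq> []\<close>] S3_two_factor_iff[OF X S] by blast
  then show ?thesis by (rule C_minus_eq_empty_if_left_ext_subset)
qed

lemma C_plus_image_shift_eq_empty:
  assumes X: "shift_space X" and S: "\<sigma> \<in> S3" and "\<not> right_invariant \<sigma>" and "u \<noteq> []"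
  shows "C_plus (image_shift \<sigma> X) u = {}"
proof -
  obtain p q where "{b. (last u, b) \<in> morph_two_factors \<sigma>} \<subseteq> {p, q}"
    using right_neighbours_not_right_invariant[OF S \<open>\<not> right_invariant \<sigma>\<close>] by blast
  then have "right_ext (image_shift \<sigma> X) u \<subseteq> {p, q}"
    using right_ext_subset_two_factors[OF \<open>u \<noteq> []\<close>] S3_two_factor_iff[OF X S] by blast
  then show ?thesis by (rule C_plus_eq_empty_if_right_ext_subset)
qed

theorem lemma5p7:
  fixes X :: "(int \<Rightarrow> nat) set" and \<sigma> :: morph
  assumes "shift_space X" and "\<sigma> \<in> S3"
  shows "(\<not> left_invariant \<sigma> \<longrightarrow>
           (\<forall>v\<in>lang X. dendric X v \<and> bispecial X v \<longrightarrow>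
              (\<forall>u. ext_image \<sigma> X v u \<and> dendric (image_shift \<sigma> X) u \<longrightarrow>
                   C_minus (image_shift \<sigma> X) u = {})) \<and>
           (dendric_shift X \<and> \<sigma> \<in> DP X \<longrightarrow>
              C_minus_all (image_shift \<sigma> X) = C_minus (image_shift \<sigma> X) [] \<and>
              C_minus (image_shift \<sigma> X) [] \<noteq> {}))
       \<and> (\<not> right_invariant \<sigma> \<longrightarrow>
           (\<forall>v\<in>lang X. dendric X v \<and> bispecial X v \<longrightarrow>
              (\<forall>u. ext_image \<sigma> X v u \<and> dendric (image_shift \<sigma> X) u \<longrightarrow>
                   C_plus (image_shift \<sigma> X) u = {})) \<and>
           (dendric_shift X \<and> \<sigma> \<in> DP X \<longrightarrow>
              C_plus_all (image_shift \<sigma> X) = C_plus (image_shift \<sigma> X) [] \<and>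
              C_plus (image_shift \<sigma> X) [] \<noteq> {}))"
proof (intro conjI impI)
  assume "\<not> left_invariant \<sigma>"
  note empty = C_minus_image_shift_eq_empty[OF assms this]
  show "\<forall>v\<in>lang X. dendric X v \<and> bispecial X v \<longrightarrow>
      (\<forall>u. ext_image \<sigma> X v u \<and> dendric (image_shift \<sigma> X) u \<longrightarrow> C_minus (image_shift \<sigma> X) u = {})"
    using empty by (simp add: ext_image_def)
  show "C_minus_all (image_shift \<sigma> X) = C_minus (image_shift \<sigma> X) []"
    using empty by (rule C_minus_all_eq_Nil)
  show "C_minus (image_shift \<sigma> X) [] \<noteq> {}"
    using C_minus_image_shift_Nil_nonempty[OF assms \<open>\<not> left_invariant \<sigma>\<close>] .
next
  assume "\<not> right_invariant \<sigma>"
  note empty = C_plus_image_shift_eq_empty[OF assms this]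
  show "\<forall>v\<in>lang X. dendric X v \<and> bispecial X v \<longrightarrow>
      (\<forall>u. ext_image \<sigma> X v u \<and> dendric (image_shift \<sigma> X) u \<longrightarrow> C_plus (image_shift \<sigma> X) u = {})"
    using empty by (simp add: ext_image_def)
  show "C_plus_all (image_shift \<sigma> X) = C_plus (image_shift \<sigma> X) []"
    using empty by (rule C_plus_all_eq_Nil)
  show "C_plus (image_shift \<sigma> X) [] \<noteq> {}"
    using C_plus_image_shift_Nil_nonempty[OF assms \<open>\<not> right_invariant \<sigma>\<close>] .
qed

end
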